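(* Let $h$ be a left-invariant metric with matrix $\Phi$ with respect to $h_0$, let $\lambda>0$, and let $\Theta=\lambda^{-1}\Phi$ be the matrix of $h$ with respect to the bi-invariant metric $\lambda h_0$. Put $\Psi=I-\Phi^{-1}$ and $\Upsilon=I-\Theta^{-1}$. Fix $X,Y\in\mathfrak g$ and let $\kappa^\Psi$ be the curvature function of the path $\Phi_t=(I-t\Psi)^{-1}$ (relative to $h_0$) and $\kappa^\Upsilon$ that of the path $\Theta_t=(I-t\Upsilon)^{-1}$ (relative to $\lambda h_0$). Then for all $0\le t\le1$, $$\kappa^\Upsilon(t)=\lambda\,(1-(1-\lambda)t)^3\,\kappa^\Psi\!\left(\frac{\lambda t}{1-(1-\lambda)t}\right).$$
   Context: $G$ is a compact Lie group with Lie algebra $\mathfrak g$ and bi-invariant metric $h_0$. For a bi-invariant metric $b$ and left-invariant metric $h$, the matrix of $h$ with respect to $b$ is the $b$-self-adjoint positive definite $\Phi$ with $h(X,Y)=b(\Phi X,Y)$ on $\mathfrak g$. For a $b$-self-adjoint $\Psi$, the inverse-linear path $\Phi_t=(I-t\Psi)^{-1}$ (relative to $b$) determines left-invariant metrics $h_t(X,Y)=b(\Phi_tX,Y)$. The unnormalized sectional curvature is $k_h(Z_1,Z_2)=h(R_h(Z_1,Z_2)Z_2,Z_1)$, and for fixed $X,Y$ the curvature function is $\kappa^\Psi(t)=k_{h_t}(\Phi_t^{-1}X,\Phi_t^{-1}Y)$. *)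

theory Defs
  imports "HOL-Analysis.Analysis"
begin

text \<open>Lie algebra g of G modelled as a finite-dimensional real vector space 'v with bracket br.
 Left-invariant metrics are inner products h on g; on left-invariant fields the Levi-Civita
 connection is determined by the Koszul formula
 2 h(nabla_X Y, Z) = h([X,Y],Z) - h([Y,Z],X) + h([Z,X],Y).\<close>

definition lie_algebra :: "('v::euclidean_space \<Rightarrow> 'v \<Rightarrow> 'v) \<Rightarrow> bool" where
  "lie_algebra br \<longleftrightarrow> bilinear br \<and> (\<forall>X Y. br X Y = - br Y X) \<and>
     (\<forall>X Y Z. br X (br Y Z) + br Y (br Z X) + br Z (br X Y) = 0)"

definition inner_prod :: "('v::euclidean_space \<Rightarrow> 'v \<Rightarrow> real) \<Rightarrow> bool" where
  "inner_prod h \<longleftrightarrow> bilinear h \<and> (\<forall>X Y. h X Y = h Y X) \<and> (\<forall>X. X \<noteq> 0 \<longrightarrow> h X X > 0)"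

definition bi_invariant :: "('v::euclidean_space \<Rightarrow> 'v \<Rightarrow> 'v) \<Rightarrow> ('v \<Rightarrow> 'v \<Rightarrow> real) \<Rightarrow> bool" where
  "bi_invariant br b \<longleftrightarrow> inner_prod b \<and> (\<forall>X Y Z. b (br X Y) Z + b Y (br X Z) = 0)"

definition metric_of :: "('v \<Rightarrow> 'v \<Rightarrow> real) \<Rightarrow> ('v \<Rightarrow> 'v) \<Rightarrow> 'v \<Rightarrow> 'v \<Rightarrow> real" where
  "metric_of b Phi X Y = b (Phi X) Y"

definition lc_conn :: "('v::euclidean_space \<Rightarrow> 'v \<Rightarrow> 'v) \<Rightarrow> ('v \<Rightarrow> 'v \<Rightarrow> real) \<Rightarrow> 'v \<Rightarrow> 'v \<Rightarrow> 'v" where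
  "lc_conn br h X Y = (THE U. \<forall>Z. h U Z = (h (br X Y) Z - h (br Y Z) X + h (br Z X) Y) / 2)"

definition curv :: "('v::euclidean_space \<Rightarrow> 'v \<Rightarrow> 'v) \<Rightarrow> ('v \<Rightarrow> 'v \<Rightarrow> real) \<Rightarrow> 'v \<Rightarrow> 'v \<Rightarrow> 'v \<Rightarrow> 'v" where
  "curv br h X Y Z = lc_conn br h X (lc_conn br h Y Z) - lc_conn br h Y (lc_conn br h X Z)
      - lc_conn br h (br X Y) Z"

definition sec_k :: "('v::euclidean_space \<Rightarrow> 'v \<Rightarrow> 'v) \<Rightarrow> ('v \<Rightarrow> 'v \<Rightarrow> real) \<Rightarrow> 'v \<Rightarrow> 'v \<Rightarrow> real" where
  "sec_k br h Z1 Z2 = h (curv br h Z1 Z2 Z2) Z1"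

definition inv_lin_path :: "('v::euclidean_space \<Rightarrow> 'v) \<Rightarrow> real \<Rightarrow> 'v \<Rightarrow> 'v" where
  "inv_lin_path Psi t = inv (\<lambda>x. x - t *\<^sub>R Psi x)"

definition curv_fun :: "('v::euclidean_space \<Rightarrow> 'v \<Rightarrow> 'v) \<Rightarrow> ('v \<Rightarrow> 'v \<Rightarrow> real) \<Rightarrow> ('v \<Rightarrow> 'v)
     \<Rightarrow> 'v \<Rightarrow> 'v \<Rightarrow> real \<Rightarrow> real" where
  "curv_fun br b Psi X Y t =
     sec_k br (metric_of b (inv_lin_path Psi t))
       (inv (inv_lin_path Psi t) X) (inv (inv_lin_path Psi t) Y)"

end

theory Submission
  imports Defs
begin

text \<open>With \<open>\<Pi> = \<Phi>\<^sup>-\<^sup>1\<close> we have \<open>\<Theta>\<^sup>-\<^sup>1 = \<lambda>\<Pi>\<close>, so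
  \<open>I - t\<Upsilon> = (1 - t)I + \<lambda>t\<Pi> = c((1 - s)I + s\<Pi>) = c(I - s\<Psi>)\<close> with
  \<open>c = 1 - (1 - \<lambda>)t\<close> and \<open>s = \<lambda>t/c\<close>. Hence \<open>\<Theta>\<^sub>t = c\<^sup>-\<^sup>1\<Phi>\<^sub>s\<close>, the metric
  \<open>\<lambda>h\<^sub>0(\<Theta>\<^sub>t-,-)\<close> is \<open>\<lambda>/c\<close> times \<open>h\<^sub>0(\<Phi>\<^sub>s-,-)\<close>, and the curvature is evaluated at
  \<open>c\<Phi>\<^sub>s\<^sup>-\<^sup>1X, c\<Phi>\<^sub>s\<^sup>-\<^sup>1Y\<close>. The Levi-Civita connection does not change under constant rescaling of
  the metric and is bilinear, so the unnormalized sectional curvature picks up the factor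
  \<open>(\<lambda>/c) c\<^sup>4 = \<lambda>c\<^sup>3\<close>.\<close>

definition pos_self_adjoint :: "('v::euclidean_space \<Rightarrow> 'v \<Rightarrow> real) \<Rightarrow> ('v \<Rightarrow> 'v) \<Rightarrow> bool" where
  "pos_self_adjoint b Phi \<longleftrightarrow> linear Phi \<and> (\<forall>U V. b (Phi U) V = b U (Phi V)) \<and>
     (\<forall>U. U \<noteq> 0 \<longrightarrow> b (Phi U) U > 0)"

lemma pos_self_adjointD:
  assumes "pos_self_adjoint b Phi"
  shows "linear Phi" and "b (Phi U) V = b U (Phi V)" and "U \<noteq> 0 \<Longrightarrow> b (Phi U) U > 0"
  using assms unfolding pos_self_adjoint_def by blast+

lemma inner_prod_bilinear: "inner_prod h \<Longrightarrow> bilinear h"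
  by (simp add: inner_prod_def)

lemma inner_prod_pos: "inner_prod h \<Longrightarrow> U \<noteq> 0 \<Longrightarrow> h U U > 0"
  by (simp add: inner_prod_def)

lemma pos_self_adjoint_id: "inner_prod b \<Longrightarrow> pos_self_adjoint b id"
  by (simp add: pos_self_adjoint_def inner_prod_pos linear_id)

lemma pos_self_adjoint_bij:
  assumes "inner_prod b" "pos_self_adjoint b Phi"
  shows "bij Phi"
proof -
  note lin = pos_self_adjointD(1)[OF assms(2)]
  have "U = 0" if "Phi U = 0" for U
    using pos_self_adjointD(3)[OF assms(2), of U] that
      bilinear_lzero[OF inner_prod_bilinear[OF assms(1)]] by auto
  then have "inj Phi" by (simp add: linear_injective_0[OF lin])
  then show ?thesis by (simp add: bij_def linear_injective_imp_surjective[OF lin])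
qed

lemma pos_self_adjoint_inv:
  assumes b: "inner_prod b" and Phi: "pos_self_adjoint b Phi"
  shows "pos_self_adjoint b (inv Phi)"
  unfolding pos_self_adjoint_def
proof (intro conjI allI impI)
  have bij: "bij Phi" by (rule pos_self_adjoint_bij[OF b Phi])
  have right: "Phi (inv Phi U) = U" for U by (rule surj_f_inv_f[OF bij_is_surj[OF bij]])
  note sa = pos_self_adjointD(2)[OF Phi]
  show "linear (inv Phi)"
    by (rule inj_linear_imp_inv_linear[OF pos_self_adjointD(1)[OF Phi] bij_is_inj[OF bij]])
  show "b (inv Phi U) V = b U (inv Phi V)" for U V
    using sa[of "inv Phi U" "inv Phi V"] by (simp add: right)
  fix U :: 'a assume "U \<noteq> 0"
  then have "inv Phi U \<noteq> 0" using right linear_0[OF pos_self_adjointD(1)[OF Phi]] by metis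
  then have "b (Phi (inv Phi U)) (inv Phi U) > 0" by (rule pos_self_adjointD(3)[OF Phi])
  then show "b (inv Phi U) U > 0" using sa[of "inv Phi U" "inv Phi U"] by (simp add: right)
qed

lemma pos_self_adjoint_convex:
  assumes b: "inner_prod b" and Phi: "pos_self_adjoint b Phi" and Psi: "pos_self_adjoint b Psi"
    and "0 \<le> s" "s \<le> 1"
  shows "pos_self_adjoint b (\<lambda>x. (1 - s) *\<^sub>R Phi x + s *\<^sub>R Psi x)"
  unfolding pos_self_adjoint_def
proof (intro conjI allI impI)
  note bl = inner_prod_bilinear[OF b]
  note bl_simps = bilinear_ladd[OF bl] bilinear_radd[OF bl] bilinear_lmul[OF bl] bilinear_rmul[OF bl]
  show "linear (\<lambda>x. (1 - s) *\<^sub>R Phi x + s *\<^sub>R Psi x)"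
    using Phi Psi by (simp add: pos_self_adjointD(1) linear_compose_add linear_compose_scale_right)
  show "b ((1 - s) *\<^sub>R Phi U + s *\<^sub>R Psi U) V = b U ((1 - s) *\<^sub>R Phi V + s *\<^sub>R Psi V)" for U V
    by (simp add: bl_simps pos_self_adjointD(2)[OF Phi] pos_self_adjointD(2)[OF Psi])
  fix U :: 'a assume "U \<noteq> 0"
  then have "b (Phi U) U > 0" "b (Psi U) U > 0"
    using Phi Psi by (simp_all add: pos_self_adjointD(3))
  then have "(1 - s) * b (Phi U) U + s * b (Psi U) U > 0"
    using \<open>0 \<le> s\<close> \<open>s \<le> 1\<close>
    by (cases "s = 0") (auto intro!: add_nonneg_pos mult_nonneg_nonneg mult_pos_pos simp: less_imp_le)
  then show "b ((1 - s) *\<^sub>R Phi U + s *\<^sub>R Psi U) U > 0" by (simp add: bl_simps)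
qed

lemma inner_prod_metric_of:
  assumes b: "inner_prod b" and Phi: "pos_self_adjoint b Phi"
  shows "inner_prod (metric_of b Phi)"
  unfolding inner_prod_def metric_of_def[abs_def]
proof (intro conjI allI impI)
  show "bilinear (\<lambda>U. b (Phi U))"
    using inner_prod_bilinear[OF b] pos_self_adjointD(1)[OF Phi]
    by (simp add: bilinear_def linear_compose[of Phi "\<lambda>x. b x _", unfolded o_def])
  show "b (Phi U) V = b (Phi V) U" for U V
    by (metis b inner_prod_def pos_self_adjointD(2)[OF Phi])
  show "U \<noteq> 0 \<Longrightarrow> b (Phi U) U > 0" for U by (rule pos_self_adjointD(3)[OF Phi])
qed

lemma inv_scaleR:
  assumes f: "linear f" "bij f" and "c \<noteq> 0"
  shows "bij (\<lambda>x. c *\<^sub>R f x)" and "inv (\<lambda>x. c *\<^sub>R f x) = (\<lambda>y. (1 / c) *\<^sub>R inv f y)"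
proof -
  have "(\<lambda>x. c *\<^sub>R f x) ((1 / c) *\<^sub>R inv f y) = y" for y
    using assms by (simp add: linear_scale surj_f_inv_f[OF bij_is_surj])
  moreover have "(1 / c) *\<^sub>R inv f (c *\<^sub>R f x) = x" for x
    using assms by (simp flip: linear_scale[OF f(1)] add: bij_is_inj)
  ultimately show "bij (\<lambda>x. c *\<^sub>R f x)" "inv (\<lambda>x. c *\<^sub>R f x) = (\<lambda>y. (1 / c) *\<^sub>R inv f y)"
    by (auto intro!: o_bij[where g = "\<lambda>y. (1 / c) *\<^sub>R inv f y"] inv_equality)
qed

lemma linear_functional_eq_inner:
  fixes f :: "'a::euclidean_space \<Rightarrow> real"
  assumes "linear f"
  shows "f Z = adjoint f 1 \<bullet> Z"
  using adjoint_works[OF assms, of Z 1] by (simp add: inner_commute)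

lemma inner_prod_riesz:
  fixes h :: "'a::euclidean_space \<Rightarrow> 'a \<Rightarrow> real"
  assumes h: "inner_prod h" and f: "linear f"
  shows "\<exists>!U. \<forall>Z. h U Z = f Z"
proof -
  note bl = inner_prod_bilinear[OF h]
  define M where "M U = adjoint (h U) 1" for U
  have hM: "h U Z = M U \<bullet> Z" for U Z
    unfolding M_def by (rule linear_functional_eq_inner) (use bl in \<open>simp add: bilinear_def\<close>)
  have "linear M"
  proof (rule linearI)
    show "M (U + V) = M U + M V" for U V
      by (rule vector_eq_rdot[THEN iffD1])
        (simp add: hM[symmetric] inner_add_left bilinear_ladd[OF bl])
    show "M (c *\<^sub>R U) = c *\<^sub>R M U" for c U
      by (rule vector_eq_rdot[THEN iffD1]) (simp add: hM[symmetric] bilinear_lmul[OF bl])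
  qed
  moreover have "inj M"
    unfolding linear_injective_0[OF \<open>linear M\<close>]
    using inner_prod_pos[OF h] hM by (metis inner_zero_left less_irrefl)
  ultimately obtain U where U: "M U = adjoint f 1"
    by (metis linear_injective_imp_surjective surjD)
  show ?thesis
  proof (rule ex1I)
    show "\<forall>Z. h U Z = f Z" by (simp add: hM U linear_functional_eq_inner[OF f])
    fix V assume V: "\<forall>Z. h V Z = f Z"
    have "h (V - U) (V - U) = 0"
      using V \<open>\<forall>Z. h U Z = f Z\<close> by (simp add: bilinear_lsub[OF bl])
    then show "V = U" using inner_prod_pos[OF h, of "V - U"] by auto
  qed
qed

lemma lc_conn_unique:
  fixes h :: "'a::euclidean_space \<Rightarrow> 'a \<Rightarrow> real"
  assumes br: "bilinear br" and h: "inner_prod h"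
  shows "\<exists>!U. \<forall>Z. h U Z = (h (br X Y) Z - h (br Y Z) X + h (br Z X) Y) / 2"
proof (rule inner_prod_riesz[OF h])
  note bl = inner_prod_bilinear[OF h]
  show "linear (\<lambda>Z. (h (br X Y) Z - h (br Y Z) X + h (br Z X) Y) / 2)"
    by (rule linearI)
      (simp_all add: bilinear_ladd[OF bl] bilinear_radd[OF bl] bilinear_lmul[OF bl]
        bilinear_rmul[OF bl] bilinear_ladd[OF br] bilinear_radd[OF br] bilinear_lmul[OF br]
        bilinear_rmul[OF br] algebra_simps add_divide_distrib diff_divide_distrib)
qed

lemma lc_conn_koszul:
  fixes h :: "'a::euclidean_space \<Rightarrow> 'a \<Rightarrow> real"
  assumes "bilinear br" "inner_prod h"
  shows "h (lc_conn br h X Y) Z = (h (br X Y) Z - h (br Y Z) X + h (br Z X) Y) / 2"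
  using theI'[OF lc_conn_unique[OF assms, of X Y]] by (simp add: lc_conn_def)

lemma lc_conn_eqI:
  fixes h :: "'a::euclidean_space \<Rightarrow> 'a \<Rightarrow> real"
  assumes "bilinear br" "inner_prod h"
    and "\<And>Z. h U Z = (h (br X Y) Z - h (br Y Z) X + h (br Z X) Y) / 2"
  shows "lc_conn br h X Y = U"
  unfolding lc_conn_def by (rule the1_equality[OF lc_conn_unique[OF assms(1,2)]]) (use assms(3) in simp)

lemma lc_conn_scaleR:
  fixes h :: "'a::euclidean_space \<Rightarrow> 'a \<Rightarrow> real"
  assumes br: "bilinear br" and h: "inner_prod h"
  shows "lc_conn br h (a *\<^sub>R X) (b *\<^sub>R Y) = (a * b) *\<^sub>R lc_conn br h X Y"
proof (rule lc_conn_eqI[OF br h])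
  note bl = inner_prod_bilinear[OF h]
  show "h ((a * b) *\<^sub>R lc_conn br h X Y) Z = (h (br (a *\<^sub>R X) (b *\<^sub>R Y)) Z
      - h (br (b *\<^sub>R Y) Z) (a *\<^sub>R X) + h (br Z (a *\<^sub>R X)) (b *\<^sub>R Y)) / 2" for Z
    by (simp add: lc_conn_koszul[OF br h] bilinear_lmul[OF bl] bilinear_rmul[OF bl]
        bilinear_lmul[OF br] bilinear_rmul[OF br]) (simp add: field_simps)
qed

lemma lc_conn_scale_metric:
  assumes "mu \<noteq> 0"
  shows "lc_conn br (\<lambda>U V. mu * h U V) = lc_conn br h"
proof -
  have "(mu * x = (mu * A - mu * B + mu * C) / 2) \<longleftrightarrow> (x = (A - B + C) / 2)" for x A B C :: real
  proof -
    have "(mu * A - mu * B + mu * C) / 2 = mu * ((A - B + C) / 2)" by (simp add: algebra_simps)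
    then show ?thesis using assms by (simp only:) simp
  qed
  then show ?thesis by (simp add: lc_conn_def[abs_def])
qed

lemma sec_k_scale:
  fixes h :: "'a::euclidean_space \<Rightarrow> 'a \<Rightarrow> real"
  assumes br: "bilinear br" and h: "inner_prod h" and "mu \<noteq> 0"
  shows "sec_k br (\<lambda>U V. mu * h U V) (c *\<^sub>R Z1) (c *\<^sub>R Z2) = mu * c ^ 4 * sec_k br h Z1 Z2"
proof -
  note bl = inner_prod_bilinear[OF h]
  have "curv br h (c *\<^sub>R Z1) (c *\<^sub>R Z2) (c *\<^sub>R Z2) = c ^ 3 *\<^sub>R curv br h Z1 Z2 Z2"
    by (simp add: curv_def lc_conn_scaleR[OF br h] bilinear_lmul[OF br] bilinear_rmul[OF br]
        algebra_simps power3_eq_cube)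
  then show ?thesis
    by (simp add: sec_k_def curv_def[abs_def] lc_conn_scale_metric[OF \<open>mu \<noteq> 0\<close>]
        bilinear_lmul[OF bl] bilinear_rmul[OF bl] power4_eq_xxxx power3_eq_cube)
qed

lemma curv_fun_eq_sec_k:
  assumes "(\<lambda>x. x - t *\<^sub>R Psi x) = L" and "bij L"
  shows "curv_fun br b Psi X Y t = sec_k br (metric_of b (inv L)) (L X) (L Y)"
  by (simp add: curv_fun_def inv_lin_path_def assms inv_inv_eq)

lemma inverse_linear_path_reparam:
  fixes x p :: "'a::real_vector"
  assumes "lam > 0" "0 \<le> t" "t \<le> 1"
  defines "c \<equiv> 1 - (1 - lam) * t" and "s \<equiv> lam * t / (1 - (1 - lam) * t)"
  shows "0 < c" and "0 \<le> s" and "s \<le> 1"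
    and "x - t *\<^sub>R (x - lam *\<^sub>R p) = c *\<^sub>R ((1 - s) *\<^sub>R x + s *\<^sub>R p)"
proof -
  have c: "c = (1 - t) + lam * t" by (simp add: c_def algebra_simps)
  show "0 < c"
    using assms(1-3) by (cases "t = 0") (simp_all add: c add_nonneg_pos)
  then have cs: "c * s = lam * t" by (simp add: s_def c_def[symmetric])
  show "0 \<le> s" using assms(1,2) \<open>0 < c\<close> by (simp add: s_def c_def[symmetric])
  show "s \<le> 1" using assms(3) \<open>0 < c\<close> by (simp add: s_def c_def[symmetric] c)
  have "c *\<^sub>R ((1 - s) *\<^sub>R x + s *\<^sub>R p) = (c - c * s) *\<^sub>R x + (c * s) *\<^sub>R p"
    by (simp add: algebra_simps)
  also have "\<dots> = x - t *\<^sub>R (x - lam *\<^sub>R p)"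
    by (simp only: cs) (simp add: c algebra_simps)
  finally show "x - t *\<^sub>R (x - lam *\<^sub>R p) = c *\<^sub>R ((1 - s) *\<^sub>R x + s *\<^sub>R p)" ..
qed

lemma curv_fun_rescale:
  assumes br: "bilinear br" and b: "inner_prod b" and B: "pos_self_adjoint b B"
    and "lam > 0" and "c > 0"
    and path_Psi: "(\<lambda>x. x - s *\<^sub>R Psi x) = B"
    and path_Upsilon: "(\<lambda>x. x - t *\<^sub>R Upsilon x) = (\<lambda>x. c *\<^sub>R B x)"
  shows "curv_fun br (\<lambda>U V. lam * b U V) Upsilon X Y t = lam * c ^ 3 * curv_fun br b Psi X Y s"
proof -
  let ?h = "metric_of b (inv B)"
  have h: "inner_prod ?h" by (rule inner_prod_metric_of[OF b pos_self_adjoint_inv[OF b B]])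
  note B_scaled = inv_scaleR[OF pos_self_adjointD(1)[OF B] pos_self_adjoint_bij[OF b B],
      of c, OF \<open>c > 0\<close>[THEN less_imp_neq, symmetric]]
  have "metric_of (\<lambda>U V. lam * b U V) (inv (\<lambda>x. c *\<^sub>R B x)) = (\<lambda>U V. (lam / c) * ?h U V)"
    by (simp add: B_scaled(2) metric_of_def[abs_def] bilinear_lmul[OF inner_prod_bilinear[OF b]])
  then have "curv_fun br (\<lambda>U V. lam * b U V) Upsilon X Y t
      = sec_k br (\<lambda>U V. (lam / c) * ?h U V) (c *\<^sub>R B X) (c *\<^sub>R B Y)"
    using curv_fun_eq_sec_k[OF path_Upsilon B_scaled(1)] by simp
  also have "\<dots> = (lam / c) * c ^ 4 * sec_k br ?h (B X) (B Y)"
    by (rule sec_k_scale[OF br h]) (use \<open>lam > 0\<close> \<open>c > 0\<close> in simp)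
  also have "\<dots> = lam * c ^ 3 * curv_fun br b Psi X Y s"
    using curv_fun_eq_sec_k[OF path_Psi pos_self_adjoint_bij[OF b B]] \<open>c > 0\<close>
    by (simp add: power4_eq_xxxx power3_eq_cube)
  finally show ?thesis .
qed

theorem mainTheorem13:
  fixes br :: "'v::euclidean_space \<Rightarrow> 'v \<Rightarrow> 'v"
    and h0 :: "'v \<Rightarrow> 'v \<Rightarrow> real"
    and Phi Theta Psi Upsilon :: "'v \<Rightarrow> 'v"
    and lam t :: real and X Y :: 'v
  assumes "lie_algebra br"
    and "bi_invariant br h0"
    and "linear Phi"
    and "\<forall>U V. h0 (Phi U) V = h0 U (Phi V)"
    and "\<forall>U. U \<noteq> 0 \<longrightarrow> h0 (Phi U) U > 0"
    and "lam > 0"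
    and "Theta = (\<lambda>U. (1 / lam) *\<^sub>R Phi U)"
    and "Psi = (\<lambda>U. U - inv Phi U)"
    and "Upsilon = (\<lambda>U. U - inv Theta U)"
    and "0 \<le> t" and "t \<le> 1"
  shows "curv_fun br (\<lambda>U V. lam * h0 U V) Upsilon X Y t =
    lam * (1 - (1 - lam) * t) ^ 3 *
      curv_fun br h0 Psi X Y (lam * t / (1 - (1 - lam) * t))"
proof -
  have br: "bilinear br" using assms(1) by (simp add: lie_algebra_def)
  have h0: "inner_prod h0" using assms(2) by (simp add: bi_invariant_def)
  have Phi: "pos_self_adjoint h0 Phi" using assms(3-5) by (simp add: pos_self_adjoint_def)
  have inv_Theta: "inv Theta = (\<lambda>U. lam *\<^sub>R inv Phi U)"
    using inv_scaleR(2)[OF assms(3) pos_self_adjoint_bij[OF h0 Phi], of "1 / lam"] assms(6,7) by simp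
  define c where "c = 1 - (1 - lam) * t"
  define s where "s = lam * t / (1 - (1 - lam) * t)"
  note reparam = inverse_linear_path_reparam[OF assms(6,10,11), folded c_def s_def]
  define B where "B x = (1 - s) *\<^sub>R x + s *\<^sub>R inv Phi x" for x
  have B: "pos_self_adjoint h0 B"
    using pos_self_adjoint_convex[OF h0 pos_self_adjoint_id[OF h0] pos_self_adjoint_inv[OF h0 Phi]
        reparam(2,3)]
    by (simp add: B_def[abs_def])
  have path_Psi: "(\<lambda>x. x - s *\<^sub>R Psi x) = B"
    by (auto simp: assms(8) B_def algebra_simps)
  have path_Upsilon: "(\<lambda>x. x - t *\<^sub>R Upsilon x) = (\<lambda>x. c *\<^sub>R B x)"
    by (simp add: assms(9) inv_Theta B_def reparam(4))
  show ?thesis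
    using curv_fun_rescale[OF br h0 B assms(6) reparam(1) path_Psi path_Upsilon]
    by (simp add: c_def s_def)
qed

end
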